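(* Let $T\in\mathcal B(H)$ and suppose $\mathcal A_T$ admits a gauge action $\gamma$. Let $\mathcal J\ne(0)$ be a closed ideal of $\mathcal A_T$ which is gauge invariant, i.e. $\gamma_\lambda(\mathcal J)\subseteq\mathcal J$ for all $\lambda\in\mathbb T$. Then there is $n\in\mathbb N$, $n\ge1$, such that $\mathcal J=\langle T^n\rangle$, the closed ideal of $\mathcal A_T$ generated by $T^n$.
   Context: $H$ is a complex Hilbert space, $T\in\mathcal B(H)$, and $\mathcal A_T$ is the operator-norm closure in $\mathcal B(H)$ of the polynomials $p(T)$ with $p(0)=0$. $\mathbb T$ is the unit circle. A gauge action on $\mathcal A_T$ is a group homomorphism $\lambda\mapsto\gamma_\lambda$ from $\mathbb T$ into the isometric algebra automorphisms of $\mathcal A_T$ such that $\gamma_\lambda(T)=\lambda T$ for all $\lambda$ and $\lambda\mapsto\gamma_\lambda(S)$ is norm continuous for each $S\in\mathcal A_T$. For $R\in\mathcal A_T$, $\langle R\rangle$ denotes the smallest closed (two-sided) ideal of $\mathcal A_T$ containing $R$. *)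

theory Defs
  imports "HOL-Analysis.Analysis"
begin

text \<open>HOL-Analysis has no complex vector spaces; we introduce complex Hilbert
spaces as a type class: a real Banach space with a complex scalar multiplication
compatible with the real one, and a complex inner product (linear in the second,
conjugate-linear in the first argument) inducing the norm.\<close>

class complex_hilbert_space = banach +
  fixes scaleC :: "complex \<Rightarrow> 'a \<Rightarrow> 'a"  (infixr \<open>*\<^sub>C\<close> 75)
    and cinner :: "'a \<Rightarrow> 'a \<Rightarrow> complex"
  assumes scaleC_add_right: "a *\<^sub>C (x + y) = a *\<^sub>C x + a *\<^sub>C y"
    and scaleC_add_left: "(a + b) *\<^sub>C x = a *\<^sub>C x + b *\<^sub>C x"
    and scaleC_scaleC: "a *\<^sub>C (b *\<^sub>C x) = (a * b) *\<^sub>C x"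
    and scaleC_one: "1 *\<^sub>C x = x"
    and scaleR_scaleC: "scaleR r x = complex_of_real r *\<^sub>C x"
    and cinner_commute: "cinner x y = cnj (cinner y x)"
    and cinner_add_right: "cinner x (y + z) = cinner x y + cinner x z"
    and cinner_scaleC_right: "cinner x (a *\<^sub>C y) = a * cinner x y"
    and cinner_norm: "cinner x x = complex_of_real ((norm x)\<^sup>2)"

text \<open>Elements of B(H) are modelled as functions H \<Rightarrow> H which are complex linear
and bounded; the operator norm is onorm, products are compositions.\<close>

definition bounded_op :: "('a::complex_hilbert_space \<Rightarrow> 'a) \<Rightarrow> bool" where
  "bounded_op A \<longleftrightarrow> (\<forall>x y. A (x + y) = A x + A y) \<and> (\<forall>c x. A (c *\<^sub>C x) = c *\<^sub>C A x)
      \<and> (\<exists>K. \<forall>x. norm (A x) \<le> K * norm x)"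

definition opnorm_closure :: "('a::complex_hilbert_space \<Rightarrow> 'a) set \<Rightarrow> ('a \<Rightarrow> 'a) set" where
  "opnorm_closure P = {S. bounded_op S \<and> (\<forall>e>0. \<exists>p\<in>P. onorm (\<lambda>x. S x - p x) < e)}"

definition op_closed :: "('a::complex_hilbert_space \<Rightarrow> 'a) set \<Rightarrow> bool" where
  "op_closed J \<longleftrightarrow> opnorm_closure J \<subseteq> J"

definition poly_ops :: "('a::complex_hilbert_space \<Rightarrow> 'a) \<Rightarrow> ('a \<Rightarrow> 'a) set" where
  "poly_ops T = {(\<lambda>x. \<Sum>k\<in>{1..n}. c k *\<^sub>C (T ^^ k) x) | n c. True}"

definition alg_T :: "('a::complex_hilbert_space \<Rightarrow> 'a) \<Rightarrow> ('a \<Rightarrow> 'a) set" where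
  "alg_T T = opnorm_closure (poly_ops T)"

definition isometric_alg_aut :: "('a::complex_hilbert_space \<Rightarrow> 'a) \<Rightarrow> (('a \<Rightarrow> 'a) \<Rightarrow> ('a \<Rightarrow> 'a)) \<Rightarrow> bool" where
  "isometric_alg_aut T g \<longleftrightarrow> bij_betw g (alg_T T) (alg_T T)
     \<and> (\<forall>A\<in>alg_T T. \<forall>B\<in>alg_T T. g (\<lambda>x. A x + B x) = (\<lambda>x. g A x + g B x))
     \<and> (\<forall>c. \<forall>A\<in>alg_T T. g (\<lambda>x. c *\<^sub>C A x) = (\<lambda>x. c *\<^sub>C g A x))
     \<and> (\<forall>A\<in>alg_T T. \<forall>B\<in>alg_T T. g (A \<circ> B) = g A \<circ> g B)
     \<and> (\<forall>A\<in>alg_T T. onorm (g A) = onorm A)"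

definition gauge_action :: "('a::complex_hilbert_space \<Rightarrow> 'a) \<Rightarrow> (complex \<Rightarrow> ('a \<Rightarrow> 'a) \<Rightarrow> ('a \<Rightarrow> 'a)) \<Rightarrow> bool" where
  "gauge_action T \<gamma> \<longleftrightarrow>
     (\<forall>l. cmod l = 1 \<longrightarrow> isometric_alg_aut T (\<gamma> l))
   \<and> (\<forall>l m. cmod l = 1 \<longrightarrow> cmod m = 1 \<longrightarrow> (\<forall>S\<in>alg_T T. \<gamma> (l * m) S = \<gamma> l (\<gamma> m S)))
   \<and> (\<forall>l. cmod l = 1 \<longrightarrow> \<gamma> l T = (\<lambda>x. l *\<^sub>C T x))
   \<and> (\<forall>S\<in>alg_T T. \<forall>l0. cmod l0 = 1 \<longrightarrow> (\<forall>e>0. \<exists>d>0. \<forall>l. cmod l = 1 \<longrightarrow> cmod (l - l0) < d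
          \<longrightarrow> onorm (\<lambda>x. \<gamma> l S x - \<gamma> l0 S x) < e))"

definition closed_ideal :: "('a::complex_hilbert_space \<Rightarrow> 'a) \<Rightarrow> ('a \<Rightarrow> 'a) set \<Rightarrow> bool" where
  "closed_ideal T J \<longleftrightarrow> J \<subseteq> alg_T T \<and> (\<lambda>x. 0) \<in> J
     \<and> (\<forall>A\<in>J. \<forall>B\<in>J. (\<lambda>x. A x + B x) \<in> J)
     \<and> (\<forall>c. \<forall>A\<in>J. (\<lambda>x. c *\<^sub>C A x) \<in> J)
     \<and> (\<forall>A\<in>J. \<forall>B\<in>alg_T T. A \<circ> B \<in> J \<and> B \<circ> A \<in> J)
     \<and> op_closed J"

definition gen_ideal :: "('a::complex_hilbert_space \<Rightarrow> 'a) \<Rightarrow> ('a \<Rightarrow> 'a) \<Rightarrow> ('a \<Rightarrow> 'a) set" where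
  "gen_ideal T R = \<Inter> {J. closed_ideal T J \<and> R \<in> J}"

end

theory Submission
  imports Defs
begin

text \<open>
  For weights \<open>w\<close> on the \<open>N\<close>-th roots of unity \<open>\<omega>\<^sup>j\<close>, the average
  \<open>\<Phi>\<^sub>w S = \<Sum>\<^sub>j w j \<gamma>\<^bsub>\<omega>\<^sup>j\<^esub> S\<close> lies in \<open>J\<close> whenever \<open>S\<close> does, and it multiplies the
  coefficient of \<open>T\<^sup>k\<close> in a polynomial by the discrete Fourier transform of \<open>w\<close> at \<open>k\<close>.
  Fourier weights isolate the coefficient of a single power \<open>T\<^sup>n\<close>: if \<open>T\<^sup>n \<notin> J\<close>, then
  \<open>T\<^sup>n\<close> has positive distance from the closed ideal \<open>J\<close>, so the \<open>n\<close>-th coefficient of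
  every polynomial close to some \<open>S \<in> J\<close> is small. Fejer weights give Cesaro means, which
  approximate \<open>S\<close> by continuity of the action; applied to a polynomial close to \<open>S\<close> they
  keep only the coefficients of \<open>T\<^sup>k\<close> with \<open>k < M\<close>, and those of the powers outside \<open>J\<close>
  can be dropped. Hence every \<open>S \<in> J\<close> is a limit of combinations of powers \<open>T\<^sup>n \<in> J\<close>,
  and since \<open>T\<^sup>n \<in> J\<close> forces \<open>T\<^sup>m \<in> J\<close> for \<open>m \<ge> n\<close>, \<open>J\<close> is generated by its least
  power of \<open>T\<close>.
\<close>

section \<open>Complex scalars and bounded operators\<close>

lemma scaleC_zero_left [simp]: "(0::complex) *\<^sub>C x = (0::'a::complex_hilbert_space)"
  by (metis scaleR_scaleC scale_zero_left of_real_0)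

lemma scaleC_zero_right [simp]: "c *\<^sub>C (0::'a::complex_hilbert_space) = 0"
  by (metis add_cancel_right_right scaleC_add_right add_0)

lemma scaleC_minus_one_left: "(-1) *\<^sub>C x = - (x::'a::complex_hilbert_space)"
  by (metis scaleR_scaleC scaleR_minus1_left of_real_minus of_real_1)

lemma scaleC_diff_right: "c *\<^sub>C (x - y) = c *\<^sub>C x - c *\<^sub>C (y::'a::complex_hilbert_space)"
  by (metis add_diff_cancel diff_add_cancel scaleC_add_right)

lemma scaleC_sum_right: "c *\<^sub>C (\<Sum>i\<in>I. f i) = (\<Sum>i\<in>I. c *\<^sub>C (f i::'a::complex_hilbert_space))"
  by (induction I rule: infinite_finite_induct) (auto simp: scaleC_add_right)

lemma scaleC_sum_left: "(\<Sum>i\<in>I. c i) *\<^sub>C x = (\<Sum>i\<in>I. c i *\<^sub>C (x::'a::complex_hilbert_space))"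
  by (induction I rule: infinite_finite_induct) (auto simp: scaleC_add_left)

lemma norm_scaleC: "norm (c *\<^sub>C x) = cmod c * norm (x::'a::complex_hilbert_space)"
proof -
  have "complex_of_real ((norm (c *\<^sub>C x))\<^sup>2) = c * cnj (c * cinner x x)"
    by (metis cinner_norm cinner_commute cinner_scaleC_right)
  also have "\<dots> = complex_of_real ((cmod c * norm x)\<^sup>2)"
    by (simp add: cinner_norm complex_norm_square[symmetric] power_mult_distrib)
  finally show ?thesis
    by (meson norm_ge_zero of_real_eq_iff power2_eq_imp_eq mult_nonneg_nonneg)
qed

lemma bounded_op_bounded_linear: "bounded_op A \<Longrightarrow> bounded_linear A"
  unfolding bounded_op_def
proof (elim conjE exE)
  fix K assume A: "\<forall>x y. A (x + y) = A x + A y" "\<forall>c x. A (c *\<^sub>C x) = c *\<^sub>C A x"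
    "\<forall>x. norm (A x) \<le> K * norm x"
  show "bounded_linear A"
  proof (rule bounded_linear_intro[where K=K])
    show "A (r *\<^sub>R x) = r *\<^sub>R A x" for r x using A by (simp add: scaleR_scaleC)
  qed (use A in \<open>auto simp: mult.commute\<close>)
qed

lemma bounded_op_scaleC_commute: "bounded_op A \<Longrightarrow> A (c *\<^sub>C x) = c *\<^sub>C A x"
  unfolding bounded_op_def by auto

lemma bounded_op_0: "bounded_op A \<Longrightarrow> A 0 = 0"
  by (rule linear_0[OF bounded_linear.linear[OF bounded_op_bounded_linear]])

lemma bounded_opI:
  assumes "bounded_linear A" and "\<And>c x. A (c *\<^sub>C x) = c *\<^sub>C A x"
  shows "bounded_op A"
proof -
  obtain K where "\<And>x. norm (A x) \<le> norm x * K"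
    using bounded_linear.bounded[OF assms(1)] by blast
  then show ?thesis
    using assms linear_add[OF bounded_linear.linear[OF assms(1)]]
    unfolding bounded_op_def by (metis mult.commute)
qed

lemma bounded_op_zero: "bounded_op (\<lambda>x. 0)"
  by (rule bounded_opI) simp_all

lemma bounded_op_add: "bounded_op A \<Longrightarrow> bounded_op B \<Longrightarrow> bounded_op (\<lambda>x. A x + B x)"
  by (rule bounded_opI, intro bounded_linear_add bounded_op_bounded_linear)
    (simp_all add: bounded_op_scaleC_commute scaleC_add_right)

lemma bounded_linear_scaleC_right: "bounded_linear (\<lambda>x::'a::complex_hilbert_space. c *\<^sub>C x)"
proof (rule bounded_linear_intro[where K="cmod c"])
  show "c *\<^sub>C (r *\<^sub>R x) = r *\<^sub>R (c *\<^sub>C x)" for r x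
    by (simp add: scaleR_scaleC scaleC_scaleC mult.commute)
qed (simp_all add: scaleC_add_right norm_scaleC mult.commute)

lemma bounded_op_scaleC: "bounded_op A \<Longrightarrow> bounded_op (\<lambda>x. c *\<^sub>C A x)"
  by (rule bounded_opI, intro bounded_linear_compose[OF bounded_linear_scaleC_right]
      bounded_op_bounded_linear)
    (simp_all add: bounded_op_scaleC_commute scaleC_scaleC mult.commute)

lemma bounded_op_diff: "bounded_op A \<Longrightarrow> bounded_op B \<Longrightarrow> bounded_op (\<lambda>x. A x - B x)"
proof -
  assume "bounded_op A" "bounded_op B"
  then have "bounded_op (\<lambda>x. A x + (-1) *\<^sub>C B x)"
    by (intro bounded_op_add bounded_op_scaleC)
  then show ?thesis by (simp add: scaleC_minus_one_left)
qed

lemma bounded_op_sum: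
  "finite I \<Longrightarrow> (\<And>i. i \<in> I \<Longrightarrow> bounded_op (f i)) \<Longrightarrow> bounded_op (\<lambda>x. \<Sum>i\<in>I. f i x)"
  by (induction I rule: finite_induct) (auto intro: bounded_op_add bounded_op_zero)

lemma bounded_op_comp: "bounded_op A \<Longrightarrow> bounded_op B \<Longrightarrow> bounded_op (A \<circ> B)"
proof (rule bounded_opI)
  assume "bounded_op A" "bounded_op B"
  then show "bounded_linear (A \<circ> B)"
    unfolding o_def by (intro bounded_linear_compose[of A B] bounded_op_bounded_linear)
qed (simp add: bounded_op_scaleC_commute)

lemma bounded_op_funpow: "bounded_op T \<Longrightarrow> bounded_op (T ^^ k)"
proof (induction k)
  case 0
  show ?case by (auto intro: bounded_opI bounded_linear_ident simp: id_def)
qed (simp add: bounded_op_comp)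

lemma onorm_scaleC_le:
  assumes "bounded_op A"
  shows "onorm (\<lambda>x. c *\<^sub>C A x) \<le> cmod c * onorm A"
proof (rule onorm_bound)
  show "0 \<le> cmod c * onorm A"
    using onorm_pos_le[OF bounded_op_bounded_linear[OF assms]] by simp
  show "norm (c *\<^sub>C A x) \<le> cmod c * onorm A * norm x" for x
    using onorm[OF bounded_op_bounded_linear[OF assms], of x]
    by (simp add: norm_scaleC mult.assoc mult_left_mono)
qed

lemma onorm_scaleC: "bounded_op A \<Longrightarrow> onorm (\<lambda>x. c *\<^sub>C A x) = cmod c * onorm A"
proof (cases "c = 0")
  case True
  then show ?thesis by (simp add: onorm_zero)
next
  case False
  assume A: "bounded_op A"
  have "A = (\<lambda>x. inverse c *\<^sub>C (c *\<^sub>C A x))"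
    using False by (simp add: scaleC_scaleC scaleC_one)
  then have "onorm A \<le> cmod (inverse c) * onorm (\<lambda>x. c *\<^sub>C A x)"
    using onorm_scaleC_le[OF bounded_op_scaleC[OF A]] by metis
  then have "cmod c * onorm A \<le> cmod c * (cmod (inverse c) * onorm (\<lambda>x. c *\<^sub>C A x))"
    by (simp add: mult_left_mono)
  also have "\<dots> = onorm (\<lambda>x. c *\<^sub>C A x)"
    using False by (simp add: norm_inverse)
  finally show ?thesis using onorm_scaleC_le[OF A, of c] by linarith
qed

lemma onorm_diff_commute: "onorm (\<lambda>x. A x - B x) = onorm (\<lambda>x. B x - A x)"
  using onorm_neg[of "\<lambda>x. A x - B x"] by simp

lemma onorm_diff_triangle:
  assumes "bounded_op A" "bounded_op B" "bounded_op C"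
  shows "onorm (\<lambda>x. A x - C x) \<le> onorm (\<lambda>x. A x - B x) + onorm (\<lambda>x. B x - C x)"
  using onorm_triangle[OF bounded_op_bounded_linear[OF bounded_op_diff[OF assms(1,2)]]
      bounded_op_bounded_linear[OF bounded_op_diff[OF assms(2,3)]]]
  by simp

lemma onorm_diff_le:
  assumes "bounded_op A" "bounded_op B"
  shows "onorm (\<lambda>x. A x - B x) \<le> onorm A + onorm B"
  using onorm_triangle[OF bounded_op_bounded_linear[OF assms(1)]
      bounded_linear_minus[OF bounded_op_bounded_linear[OF assms(2)]]]
  by (simp add: onorm_neg)

definition pow_comb :: "('a::complex_hilbert_space \<Rightarrow> 'a) \<Rightarrow> nat set \<Rightarrow> (nat \<Rightarrow> complex) \<Rightarrow> 'a \<Rightarrow> 'a"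
  where "pow_comb T I c = (\<lambda>x. \<Sum>k\<in>I. c k *\<^sub>C (T ^^ k) x)"

lemma bounded_op_pow_comb: "bounded_op T \<Longrightarrow> finite I \<Longrightarrow> bounded_op (pow_comb T I c)"
  unfolding pow_comb_def by (intro bounded_op_sum bounded_op_scaleC bounded_op_funpow)

lemma pow_comb_extend:
  assumes "finite I'" "I \<subseteq> I'"
  shows "pow_comb T I c = pow_comb T I' (\<lambda>k. if k \<in> I then c k else 0)"
  unfolding pow_comb_def
  by (rule ext, rule sum.mono_neutral_cong_left) (use assms in auto)

lemma pow_comb_add: "(\<lambda>x. pow_comb T I a x + pow_comb T I b x) = pow_comb T I (\<lambda>k. a k + b k)"
  by (simp add: pow_comb_def sum.distrib scaleC_add_left)

lemma pow_comb_scaleC: "(\<lambda>x. c *\<^sub>C pow_comb T I a x) = pow_comb T I (\<lambda>k. c * a k)"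
  by (simp add: pow_comb_def scaleC_sum_right scaleC_scaleC)

lemma pow_comb_singleton: "pow_comb T {k} (\<lambda>_. 1) = T ^^ k"
  by (simp add: pow_comb_def scaleC_one)

lemma onorm_pow_comb_le:
  assumes "bounded_op T" "finite I"
  shows "onorm (pow_comb T I c) \<le> (\<Sum>k\<in>I. cmod (c k) * onorm (T ^^ k))"
  unfolding pow_comb_def
  using onorm_sum[OF assms(2), of "\<lambda>k x. c k *\<^sub>C (T ^^ k) x"] assms
  by (simp add: bounded_op_bounded_linear bounded_op_scaleC bounded_op_funpow onorm_scaleC)

lemma pow_comb_Int_Diff:
  assumes "finite I"
  shows "pow_comb T I c = (\<lambda>x. pow_comb T (I \<inter> K) c x + pow_comb T (I - K) c x)"
  unfolding pow_comb_def by (rule ext, rule sum.Int_Diff[OF assms])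

lemma pow_comb_cong: "(\<And>k. k \<in> I \<Longrightarrow> c k = c' k) \<Longrightarrow> pow_comb T I c = pow_comb T I c'"
  unfolding pow_comb_def by (simp cong: sum.cong)

lemma pow_comb_delta:
  assumes "finite I" "n \<in> I"
  shows "pow_comb T I (\<lambda>k. if k = n then c else 0) = (\<lambda>x. c *\<^sub>C (T ^^ n) x)"
  unfolding pow_comb_def using assms by (simp add: if_distrib[of "\<lambda>a. a *\<^sub>C _"] cong: if_cong)

lemma pow_comb_in_poly_ops: "pow_comb T {1..m} c \<in> poly_ops T"
  unfolding poly_ops_def pow_comb_def by (rule CollectI, rule exI[of _ m], rule exI[of _ c]) simp

lemma poly_ops_eq: "poly_ops T = {pow_comb T I c | I c. finite I \<and> 0 \<notin> I}"
proof (intro antisym subsetI)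
  fix p assume "p \<in> poly_ops T"
  then obtain m c where "p = (\<lambda>x. \<Sum>k\<in>{1..m}. c k *\<^sub>C (T ^^ k) x)"
    unfolding poly_ops_def by blast
  then have "p = pow_comb T {1..m} c" by (simp add: pow_comb_def)
  then show "p \<in> {pow_comb T I c | I c. finite I \<and> 0 \<notin> I}"
    unfolding mem_Collect_eq by (intro exI[of _ "{1..m}"] exI[of _ c]) simp
next
  fix p assume "p \<in> {pow_comb T I c | I c. finite I \<and> 0 \<notin> I}"
  then obtain I c where I: "finite I" "0 \<notin> I" and p: "p = pow_comb T I c" by blast
  obtain m where m: "I \<subseteq> {..<m}" using finite_nat_bounded[OF I(1)] by blast
  have "I \<subseteq> {1..m}"
  proof
    fix k assume "k \<in> I"
    with I(2) m show "k \<in> {1..m}" by (cases k) auto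
  qed
  then have "p = pow_comb T {1..m} (\<lambda>k. if k \<in> I then c k else 0)"
    unfolding p by (intro pow_comb_extend) simp_all
  then show "p \<in> poly_ops T"
    using pow_comb_in_poly_ops[of T m "\<lambda>k. if k \<in> I then c k else 0"] by simp
qed

lemma pow_comb_in_poly_opsI: "finite I \<Longrightarrow> 0 \<notin> I \<Longrightarrow> pow_comb T I c \<in> poly_ops T"
  unfolding poly_ops_eq by blast

lemma poly_opsE:
  assumes "p \<in> poly_ops T"
  obtains I c where "finite I" "0 \<notin> I" "p = pow_comb T I c"
  using assms unfolding poly_ops_eq by blast

lemma poly_ops_add: "p \<in> poly_ops T \<Longrightarrow> q \<in> poly_ops T \<Longrightarrow> (\<lambda>x. p x + q x) \<in> poly_ops T"
proof (elim poly_opsE)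
  fix I a I' b assume I: "finite I" "0 \<notin> I" "finite I'" "0 \<notin> I'"
    and pq: "p = pow_comb T I a" "q = pow_comb T I' b"
  let ?a = "\<lambda>k. if k \<in> I then a k else 0" and ?b = "\<lambda>k. if k \<in> I' then b k else 0"
  have "p = pow_comb T (I \<union> I') ?a" "q = pow_comb T (I \<union> I') ?b"
    unfolding pq using I by (intro pow_comb_extend; simp)+
  then have "(\<lambda>x. p x + q x) = pow_comb T (I \<union> I') (\<lambda>k. ?a k + ?b k)"
    by (simp only: pow_comb_add)
  then show ?thesis using I by (simp add: pow_comb_in_poly_opsI)
qed

lemma poly_ops_scaleC: "p \<in> poly_ops T \<Longrightarrow> (\<lambda>x. c *\<^sub>C p x) \<in> poly_ops T"
  by (elim poly_opsE) (simp add: pow_comb_scaleC pow_comb_in_poly_opsI)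

lemma bounded_op_opnorm_closure: "S \<in> opnorm_closure P \<Longrightarrow> bounded_op S"
  unfolding opnorm_closure_def by blast

lemma opnorm_closureE:
  assumes "S \<in> opnorm_closure P" "e > 0"
  obtains p where "p \<in> P" "onorm (\<lambda>x. S x - p x) < e"
  using assms unfolding opnorm_closure_def by blast

lemma opnorm_closure_add:
  assumes add: "\<And>p q. p \<in> P \<Longrightarrow> q \<in> P \<Longrightarrow> (\<lambda>x. p x + q x) \<in> P"
    and bounded: "\<And>p. p \<in> P \<Longrightarrow> bounded_op p"
    and S: "S \<in> opnorm_closure P" and R: "R \<in> opnorm_closure P"
  shows "(\<lambda>x. S x + R x) \<in> opnorm_closure P"
  unfolding opnorm_closure_def
proof (intro CollectI conjI allI impI)
  have bSR: "bounded_op S" "bounded_op R"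
    using S R by (simp_all add: bounded_op_opnorm_closure)
  then show "bounded_op (\<lambda>x. S x + R x)" by (rule bounded_op_add)
  fix e :: real assume "e > 0"
  then have "e/2 > 0" by simp
  obtain p where p: "p \<in> P" "onorm (\<lambda>x. S x - p x) < e/2"
    using S \<open>e/2 > 0\<close> by (rule opnorm_closureE)
  obtain q where q: "q \<in> P" "onorm (\<lambda>x. R x - q x) < e/2"
    using R \<open>e/2 > 0\<close> by (rule opnorm_closureE)
  note pq = p(1) q(1)
  have "onorm (\<lambda>x. S x + R x - (p x + q x))
      \<le> onorm (\<lambda>x. S x - p x) + onorm (\<lambda>x. R x - q x)"
    using onorm_triangle[OF bounded_op_bounded_linear bounded_op_bounded_linear,
        OF bounded_op_diff[OF bSR(1) bounded[OF pq(1)]] bounded_op_diff[OF bSR(2) bounded[OF pq(2)]]]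
    by (simp only: add_diff_add)
  with p(2) q(2) have "onorm (\<lambda>x. S x + R x - (p x + q x)) < e" by linarith
  then show "\<exists>r\<in>P. onorm (\<lambda>x. S x + R x - r x) < e"
    using add[OF pq] by (rule bexI)
qed

lemma opnorm_closure_scaleC:
  assumes scale: "\<And>p. p \<in> P \<Longrightarrow> (\<lambda>x. c *\<^sub>C p x) \<in> P"
    and bounded: "\<And>p. p \<in> P \<Longrightarrow> bounded_op p"
    and S: "S \<in> opnorm_closure P"
  shows "(\<lambda>x. c *\<^sub>C S x) \<in> opnorm_closure P"
  unfolding opnorm_closure_def
proof (intro CollectI conjI allI impI)
  have bS: "bounded_op S" using S by (rule bounded_op_opnorm_closure)
  then show "bounded_op (\<lambda>x. c *\<^sub>C S x)" by (rule bounded_op_scaleC)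
  fix e :: real assume e: "e > 0"
  have c: "1 + cmod c > 0" by (simp add: add_pos_nonneg)
  with e have "e / (1 + cmod c) > 0" by simp
  obtain p where p: "p \<in> P" "onorm (\<lambda>x. S x - p x) < e / (1 + cmod c)"
    using S \<open>e / (1 + cmod c) > 0\<close> by (rule opnorm_closureE)
  have "onorm (\<lambda>x. c *\<^sub>C S x - c *\<^sub>C p x) = cmod c * onorm (\<lambda>x. S x - p x)"
    using onorm_scaleC[OF bounded_op_diff[OF bS bounded[OF p(1)]], of c] by (simp add: scaleC_diff_right)
  also have "\<dots> \<le> cmod c * (e / (1 + cmod c))"
    using p(2) by (intro mult_left_mono) simp_all
  also have "\<dots> = e - e / (1 + cmod c)"
    using c by (simp add: field_simps)
  also have "\<dots> < e"
    using \<open>e / (1 + cmod c) > 0\<close> by linarith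
  finally show "\<exists>q\<in>P. onorm (\<lambda>x. c *\<^sub>C S x - q x) < e"
    using scale[OF p(1)] by (rule bexI)
qed

lemma bounded_op_poly_ops: "bounded_op T \<Longrightarrow> p \<in> poly_ops T \<Longrightarrow> bounded_op p"
  by (elim poly_opsE) (simp add: bounded_op_pow_comb)

lemma bounded_op_alg_T: "S \<in> alg_T T \<Longrightarrow> bounded_op S"
  unfolding alg_T_def by (rule bounded_op_opnorm_closure)

lemma poly_ops_subset_alg_T:
  assumes "bounded_op T"
  shows "poly_ops T \<subseteq> alg_T T"
  unfolding alg_T_def opnorm_closure_def
proof (intro subsetI CollectI conjI allI impI)
  fix p and e :: real assume p: "p \<in> poly_ops T"
  show "bounded_op p" by (rule bounded_op_poly_ops[OF assms p])
  assume "e > 0"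
  then have "onorm (\<lambda>x. p x - p x) < e" by (simp add: onorm_zero)
  then show "\<exists>q\<in>poly_ops T. onorm (\<lambda>x. p x - q x) < e"
    using p by (rule bexI)
qed

lemma pow_comb_in_alg_T: "bounded_op T \<Longrightarrow> finite I \<Longrightarrow> 0 \<notin> I \<Longrightarrow> pow_comb T I c \<in> alg_T T"
  by (rule subsetD[OF poly_ops_subset_alg_T pow_comb_in_poly_opsI])

lemma funpow_in_alg_T: "bounded_op T \<Longrightarrow> 1 \<le> k \<Longrightarrow> T ^^ k \<in> alg_T T"
  using pow_comb_in_alg_T[of T "{k}" "\<lambda>_. 1"] by (simp add: pow_comb_singleton)

lemma alg_T_add: "bounded_op T \<Longrightarrow> S \<in> alg_T T \<Longrightarrow> R \<in> alg_T T \<Longrightarrow> (\<lambda>x. S x + R x) \<in> alg_T T"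
  unfolding alg_T_def by (rule opnorm_closure_add[OF poly_ops_add bounded_op_poly_ops])

lemma alg_T_scaleC: "bounded_op T \<Longrightarrow> S \<in> alg_T T \<Longrightarrow> (\<lambda>x. c *\<^sub>C S x) \<in> alg_T T"
  unfolding alg_T_def by (rule opnorm_closure_scaleC[OF poly_ops_scaleC bounded_op_poly_ops])

lemma alg_T_diff: "bounded_op T \<Longrightarrow> S \<in> alg_T T \<Longrightarrow> R \<in> alg_T T \<Longrightarrow> (\<lambda>x. S x - R x) \<in> alg_T T"
  using alg_T_add[OF _ _ alg_T_scaleC, of T S R "-1"] by (simp add: scaleC_minus_one_left)

section \<open>Gauge actions\<close>

locale gauge =
  fixes T :: "'a::complex_hilbert_space \<Rightarrow> 'a"
    and \<gamma> :: "complex \<Rightarrow> ('a \<Rightarrow> 'a) \<Rightarrow> 'a \<Rightarrow> 'a"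
  assumes bounded_T: "bounded_op T"
    and gauge_action: "gauge_action T \<gamma>"
begin

lemma gauge_aut: "cmod l = 1 \<Longrightarrow> isometric_alg_aut T (\<gamma> l)"
  using gauge_action unfolding gauge_action_def by blast

lemma gauge_in_alg_T: "cmod l = 1 \<Longrightarrow> S \<in> alg_T T \<Longrightarrow> \<gamma> l S \<in> alg_T T"
  using gauge_aut unfolding isometric_alg_aut_def bij_betw_def by blast

lemma bounded_op_gauge: "cmod l = 1 \<Longrightarrow> S \<in> alg_T T \<Longrightarrow> bounded_op (\<gamma> l S)"
  by (rule bounded_op_alg_T[OF gauge_in_alg_T])

lemma gauge_add:
  "cmod l = 1 \<Longrightarrow> S \<in> alg_T T \<Longrightarrow> R \<in> alg_T T \<Longrightarrow> \<gamma> l (\<lambda>x. S x + R x) = (\<lambda>x. \<gamma> l S x + \<gamma> l R x)"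
  using gauge_aut unfolding isometric_alg_aut_def by blast

lemma gauge_scaleC: "cmod l = 1 \<Longrightarrow> S \<in> alg_T T \<Longrightarrow> \<gamma> l (\<lambda>x. c *\<^sub>C S x) = (\<lambda>x. c *\<^sub>C \<gamma> l S x)"
  using gauge_aut unfolding isometric_alg_aut_def by blast

lemma gauge_comp: "cmod l = 1 \<Longrightarrow> S \<in> alg_T T \<Longrightarrow> R \<in> alg_T T \<Longrightarrow> \<gamma> l (S \<circ> R) = \<gamma> l S \<circ> \<gamma> l R"
  using gauge_aut unfolding isometric_alg_aut_def by blast

lemma onorm_gauge: "cmod l = 1 \<Longrightarrow> S \<in> alg_T T \<Longrightarrow> onorm (\<gamma> l S) = onorm S"
  using gauge_aut unfolding isometric_alg_aut_def by blast

lemma gauge_T: "cmod l = 1 \<Longrightarrow> \<gamma> l T = (\<lambda>x. l *\<^sub>C T x)"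
  using gauge_action unfolding gauge_action_def by blast

lemma gauge_mult:
  "cmod l = 1 \<Longrightarrow> cmod m = 1 \<Longrightarrow> S \<in> alg_T T \<Longrightarrow> \<gamma> (l * m) S = \<gamma> l (\<gamma> m S)"
  using gauge_action unfolding gauge_action_def by blast

lemma gauge_continuous:
  "S \<in> alg_T T \<Longrightarrow> cmod l0 = 1 \<Longrightarrow> e > 0 \<Longrightarrow>
    \<exists>d>0. \<forall>l. cmod l = 1 \<longrightarrow> cmod (l - l0) < d \<longrightarrow> onorm (\<lambda>x. \<gamma> l S x - \<gamma> l0 S x) < e"
  using gauge_action unfolding gauge_action_def by blast

lemma gauge_diff:
  assumes l: "cmod l = 1" and S: "S \<in> alg_T T" and R: "R \<in> alg_T T"
  shows "\<gamma> l (\<lambda>x. S x - R x) = (\<lambda>x. \<gamma> l S x - \<gamma> l R x)"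
proof -
  have "\<gamma> l (\<lambda>x. S x + (-1) *\<^sub>C R x) = (\<lambda>x. \<gamma> l S x + \<gamma> l (\<lambda>x. (-1) *\<^sub>C R x) x)"
    by (rule gauge_add[OF l S alg_T_scaleC[OF bounded_T R]])
  also have "\<gamma> l (\<lambda>x. (-1) *\<^sub>C R x) = (\<lambda>x. (-1) *\<^sub>C \<gamma> l R x)"
    by (rule gauge_scaleC[OF l R])
  finally show ?thesis by (simp add: scaleC_minus_one_left)
qed

lemma gauge_funpow:
  assumes l: "cmod l = 1" and k: "1 \<le> k"
  shows "\<gamma> l (T ^^ k) = (\<lambda>x. (l ^ k) *\<^sub>C (T ^^ k) x)"
  using k
proof (induction k rule: nat_induct_at_least)
  case base
  then show ?case using gauge_T[OF l] by simp
next
  case (Suc k)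
  have "T \<in> alg_T T" using funpow_in_alg_T[OF bounded_T, of 1] by simp
  then have "\<gamma> l (T ^^ Suc k) = \<gamma> l T \<circ> \<gamma> l (T ^^ k)"
    using gauge_comp[OF l _ funpow_in_alg_T[OF bounded_T Suc.hyps]] by simp
  also have "\<dots> = (\<lambda>x. (l ^ Suc k) *\<^sub>C (T ^^ Suc k) x)"
    unfolding Suc.IH gauge_T[OF l]
    by (simp add: fun_eq_iff bounded_op_scaleC_commute[OF bounded_T] scaleC_scaleC)
  finally show ?case .
qed

lemma gauge_pow_comb:
  assumes l: "cmod l = 1" and I: "finite I" "0 \<notin> I"
  shows "\<gamma> l (pow_comb T I c) = pow_comb T I (\<lambda>k. c k * l ^ k)"
  using I
proof (induction I rule: finite_induct)
  case empty
  have "(\<lambda>x. 0) \<in> alg_T T"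
    using pow_comb_in_alg_T[OF bounded_T, of "{}"] by (simp add: pow_comb_def)
  from gauge_scaleC[OF l this, of 0] show ?case by (simp add: pow_comb_def)
next
  case (insert k I)
  have k: "1 \<le> k" using insert.prems by (simp add: Suc_le_eq)
  have split: "pow_comb T (insert k I) a = (\<lambda>x. a k *\<^sub>C (T ^^ k) x + pow_comb T I a x)" for a
    using insert.hyps by (simp add: pow_comb_def)
  have Tk: "(\<lambda>x. c k *\<^sub>C (T ^^ k) x) \<in> alg_T T"
    by (rule alg_T_scaleC[OF bounded_T funpow_in_alg_T[OF bounded_T k]])
  have "\<gamma> l (\<lambda>x. c k *\<^sub>C (T ^^ k) x) = (\<lambda>x. (c k * l ^ k) *\<^sub>C (T ^^ k) x)"
    using gauge_scaleC[OF l funpow_in_alg_T[OF bounded_T k]] gauge_funpow[OF l k]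
    by (simp add: scaleC_scaleC)
  moreover have "\<gamma> l (pow_comb T I c) = pow_comb T I (\<lambda>k. c k * l ^ k)"
    using insert by simp
  moreover have "pow_comb T I c \<in> alg_T T"
    using insert by (simp add: pow_comb_in_alg_T[OF bounded_T])
  ultimately show ?case
    unfolding split using gauge_add[OF l Tk] by simp
qed

lemma gauge_one:
  assumes "S \<in> alg_T T"
  shows "\<gamma> 1 S = S"
proof -
  have "\<gamma> 1 (\<gamma> 1 S) = \<gamma> 1 S"
    using gauge_mult[of 1 1 S] assms by simp
  moreover have "inj_on (\<gamma> 1) (alg_T T)"
    using gauge_aut[of 1] unfolding isometric_alg_aut_def bij_betw_def by simp
  ultimately show ?thesis
    using gauge_in_alg_T[of 1 S] assms by (simp add: inj_on_def)
qed

lemma gauge_continuous_at_one: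
  assumes "S \<in> alg_T T" "e > 0"
  shows "\<exists>d>0. \<forall>l. cmod l = 1 \<longrightarrow> cmod (l - 1) < d \<longrightarrow> onorm (\<lambda>x. \<gamma> l S x - S x) < e"
  using gauge_continuous[OF assms(1) _ assms(2), of 1] by (simp add: gauge_one[OF assms(1)])

end

section \<open>Roots of unity and averaging weights\<close>

definition unit_root :: "nat \<Rightarrow> nat \<Rightarrow> complex"
  where "unit_root N j = cis (2 * pi * real j / real N)"

lemma norm_unit_root [simp]: "cmod (unit_root N j) = 1"
  by (simp add: unit_root_def)

lemma unit_root_power: "unit_root N j ^ k = unit_root N (j * k)"
  unfolding unit_root_def by (subst Complex.DeMoivre) (simp add: algebra_simps)

lemma unit_root_mult: "unit_root N a * unit_root N b = unit_root N (a + b)"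
  unfolding unit_root_def cis_mult by (simp add: add_divide_distrib algebra_simps)

lemma unit_root_eq_1_iff:
  assumes N: "N > 0"
  shows "unit_root N d = 1 \<longleftrightarrow> N dvd d"
proof
  assume "unit_root N d = 1"
  then have "cos (2 * pi * real d / real N) = 1"
    unfolding unit_root_def by (metis cis.sel(1) one_complex.sel(1))
  then obtain m :: int where "2 * pi * real d / real N = real_of_int m * 2 * pi"
    by (subst (asm) cos_one_2pi_int) blast
  then have "int d = m * int N"
    using N by (simp add: field_simps) (metis of_int_eq_iff of_int_mult of_int_of_nat_eq)
  then show "N dvd d" by (metis dvd_triv_right int_dvd_int_iff dvd_def mult.commute)
next
  assume "N dvd d"
  then obtain t where "d = N * t" by blast
  then have "2 * pi * real d / real N = 2 * pi * real t" using N by (simp add: field_simps)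
  then show "unit_root N d = 1" unfolding unit_root_def by (metis cis_multiple_2pi Ints_of_nat)
qed

lemma sum_unit_root:
  assumes N: "N > 0"
  shows "(\<Sum>j<N. unit_root N (j * d)) = (if N dvd d then of_nat N else 0)"
proof (cases "N dvd d")
  case True
  then have "unit_root N (j * d) = 1" for j using unit_root_eq_1_iff[OF N] by simp
  then show ?thesis using True by simp
next
  case False
  define z where "z = unit_root N d"
  have "z \<noteq> 1" using False unit_root_eq_1_iff[OF N] z_def by simp
  have "(\<Sum>j<N. unit_root N (j * d)) = (\<Sum>j<N. z ^ j)"
    unfolding z_def unit_root_power by (simp add: mult.commute)
  also have "\<dots> = (z ^ N - 1) / (z - 1)" using \<open>z \<noteq> 1\<close> by (rule geometric_sum)
  also have "z ^ N = 1" unfolding z_def unit_root_power by (simp add: unit_root_eq_1_iff[OF N])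
  finally show ?thesis using False by simp
qed

lemma cnj_unit_root:
  assumes N: "N > 0" and b: "b \<le> N"
  shows "cnj (unit_root N (j * b)) = unit_root N (j * (N - b))"
proof -
  have "unit_root N (j * b) * unit_root N (j * (N - b)) = 1"
    using b unit_root_eq_1_iff[OF N, of "j * N"]
    by (simp add: unit_root_mult add_mult_distrib2[symmetric])
  moreover have "unit_root N (j * b) * cnj (unit_root N (j * b)) = 1"
    by (metis complex_norm_square of_real_1 one_power2 norm_unit_root)
  moreover have "unit_root N (j * b) \<noteq> 0"
    by (metis norm_zero norm_unit_root zero_neq_one)
  ultimately show ?thesis by (metis mult_left_cancel)
qed

lemma dvd_less_double_imp_eq:
  assumes "N dvd (x::nat)" "0 < x" "x < 2 * N"
  shows "x = N"
proof -
  obtain q where q: "x = N * q" using assms(1) by blast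
  with assms(2,3) have "0 < q" "q < 2" by (auto simp: mult_less_cancel1)
  then show ?thesis using q by simp
qed

definition weight_transform :: "nat \<Rightarrow> (nat \<Rightarrow> complex) \<Rightarrow> nat \<Rightarrow> complex"
  where "weight_transform N w k = (\<Sum>j<N. w j * unit_root N (j * k))"

text \<open>\<open>unit_root N (j * (N - n))\<close> is \<open>\<omega>\<^sup>j\<close> to the power \<open>-n\<close>, so averaging against these
  weights extracts the \<open>n\<close>-th coefficient.\<close>

definition fourier_weight :: "nat \<Rightarrow> nat \<Rightarrow> nat \<Rightarrow> complex"
  where "fourier_weight N n j = unit_root N (j * (N - n)) / of_nat N"

lemma sum_norm_fourier_weight: "N > 0 \<Longrightarrow> (\<Sum>j<N. cmod (fourier_weight N n j)) = 1"
  unfolding fourier_weight_def by (simp add: norm_divide)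

lemma weight_transform_fourier_weight:
  assumes "0 < n" "n < N" "0 < k" "k < N"
  shows "weight_transform N (fourier_weight N n) k = (if k = n then 1 else 0)"
proof -
  have N: "N > 0" using assms by simp
  have "N dvd (N - n + k) \<longleftrightarrow> k = n"
  proof
    assume "N dvd (N - n + k)"
    then have "N - n + k = N" by (rule dvd_less_double_imp_eq) (use assms in auto)
    then show "k = n" using assms by simp
  qed (use assms in auto)
  moreover have "weight_transform N (fourier_weight N n) k
      = (\<Sum>j<N. unit_root N (j * (N - n + k))) / of_nat N"
    unfolding weight_transform_def fourier_weight_def
    by (simp add: sum_divide_distrib unit_root_mult algebra_simps)
  ultimately show ?thesis using N by (simp add: sum_unit_root)
qed

text \<open>The discrete Fejer kernel of order \<open>M\<close>; its transform is \<open>max 0 (1 - k/M)\<close>.\<close>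

definition fejer_weight :: "nat \<Rightarrow> nat \<Rightarrow> nat \<Rightarrow> complex"
  where "fejer_weight N M j =
    complex_of_real ((cmod (\<Sum>a<M. unit_root N (j * a)))\<^sup>2 / (real M * real N))"

lemma norm_sum_unit_root_squared:
  assumes N: "N > 0" and M: "M \<le> N"
  shows "complex_of_real ((cmod (\<Sum>a<M. unit_root N (j * a)))\<^sup>2)
    = (\<Sum>a<M. \<Sum>b<M. unit_root N (j * (a + (N - b))))"
proof -
  have "complex_of_real ((cmod (\<Sum>a<M. unit_root N (j * a)))\<^sup>2)
      = (\<Sum>a<M. unit_root N (j * a)) * cnj (\<Sum>b<M. unit_root N (j * b))"
    by (rule complex_norm_square)
  also have "cnj (\<Sum>b<M. unit_root N (j * b)) = (\<Sum>b<M. unit_root N (j * (N - b)))"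
    using M by (simp add: cnj_unit_root[OF N])
  finally show ?thesis
    by (simp add: sum_product unit_root_mult add_mult_distrib2)
qed

lemma sum_unit_root_shifted_pair:
  assumes N: "N > 0" and ab: "a < M" "b < M" and kM: "k + M \<le> N"
  shows "(\<Sum>j<N. unit_root N (j * (a + (N - b) + k))) = (if b = a + k then of_nat N else 0)"
proof -
  have "N dvd (a + (N - b) + k) \<longleftrightarrow> b = a + k"
  proof
    assume "N dvd (a + (N - b) + k)"
    then have "a + (N - b) + k = N" by (rule dvd_less_double_imp_eq) (use ab kM in auto)
    then show "b = a + k" using ab kM by simp
  qed (use ab kM in auto)
  then show ?thesis by (simp add: sum_unit_root[OF N])
qed

lemma card_shifted_pairs: "(\<Sum>a<M. \<Sum>b<M. if b = a + k then (1::complex) else 0) = of_nat (M - k)"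
proof -
  have "(\<Sum>a<M. \<Sum>b<M. if b = a + k then (1::complex) else 0) = (\<Sum>a<M. if a + k < M then 1 else 0)"
    by (intro sum.cong refl) (simp add: sum.delta')
  also have "\<dots> = of_nat (card {a. a < M \<and> a + k < M})"
    by (simp add: sum.If_cases Int_def)
  also have "{a. a < M \<and> a + k < M} = {..<M - k}" by auto
  finally show ?thesis by simp
qed

lemma weight_transform_fejer_weight:
  assumes N: "N > 0" and M: "M > 0" and kM: "k + M \<le> N"
  shows "weight_transform N (fejer_weight N M) k = of_nat (M - k) / of_nat M"
proof -
  have "M \<le> N" using kM by simp
  have "fejer_weight N M j * unit_root N (j * k)
      = (\<Sum>a<M. \<Sum>b<M. unit_root N (j * (a + (N - b) + k))) / (of_nat M * of_nat N)" for j
    unfolding fejer_weight_def of_real_divide norm_sum_unit_root_squared[OF N \<open>M \<le> N\<close>]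
    by (simp add: sum_distrib_right unit_root_mult add_mult_distrib2)
  then have "weight_transform N (fejer_weight N M) k
      = (\<Sum>a<M. \<Sum>b<M. \<Sum>j<N. unit_root N (j * (a + (N - b) + k))) / (of_nat M * of_nat N)"
    unfolding weight_transform_def by (simp add: sum_divide_distrib sum.swap[of _ "{..<N}"])
  also have "(\<Sum>a<M. \<Sum>b<M. \<Sum>j<N. unit_root N (j * (a + (N - b) + k)))
      = (\<Sum>a<M. \<Sum>b<M. if b = a + k then of_nat N else 0)"
    using kM by (intro sum.cong refl sum_unit_root_shifted_pair[OF N]) auto
  also have "\<dots> = of_nat N * (\<Sum>a<M. \<Sum>b<M. if b = a + k then 1 else 0)"
    by (simp add: sum_distrib_left if_distrib cong: if_cong)
  also have "\<dots> = of_nat N * of_nat (M - k)"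
    by (simp only: card_shifted_pairs)
  finally show ?thesis using N M by simp
qed

lemma norm_fejer_factor_le: "M > 0 \<Longrightarrow> cmod (of_nat (M - k) / of_nat M :: complex) \<le> 1"
  by (simp add: norm_divide)

lemma norm_fejer_weight:
  "cmod (fejer_weight N M j) = (cmod (\<Sum>a<M. unit_root N (j * a)))\<^sup>2 / (real M * real N)"
  unfolding fejer_weight_def norm_of_real by simp

lemma of_real_norm_fejer_weight: "complex_of_real (cmod (fejer_weight N M j)) = fejer_weight N M j"
  by (simp only: norm_fejer_weight) (simp only: fejer_weight_def)

lemma sum_fejer_weight:
  assumes N: "N > 0" and M: "M > 0" "M \<le> N"
  shows "(\<Sum>j<N. fejer_weight N M j) = 1" "(\<Sum>j<N. cmod (fejer_weight N M j)) = 1"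
proof -
  show s: "(\<Sum>j<N. fejer_weight N M j) = 1"
    using weight_transform_fejer_weight[OF N M(1), of 0] M
    by (simp add: weight_transform_def unit_root_def)
  have "complex_of_real (\<Sum>j<N. cmod (fejer_weight N M j)) = (\<Sum>j<N. fejer_weight N M j)"
    by (simp only: of_real_sum of_real_norm_fejer_weight)
  then show "(\<Sum>j<N. cmod (fejer_weight N M j)) = 1"
    unfolding s of_real_eq_1_iff .
qed

lemma norm_geometric_sum_le:
  assumes z: "cmod z = 1" "z \<noteq> 1"
  shows "cmod (\<Sum>a<M. z ^ a) \<le> 2 / cmod (z - 1)"
proof -
  have "(\<Sum>a<M. z ^ a) = (z ^ M - 1) / (z - 1)" using z(2) by (rule geometric_sum)
  moreover have "cmod (z ^ M - 1) \<le> 2"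
    using norm_triangle_ineq4[of "z ^ M" 1] z(1) by (simp add: norm_power)
  ultimately show ?thesis by (simp add: norm_divide divide_right_mono)
qed

lemma norm_fejer_weight_le:
  assumes N: "N > 0" and M: "M > 0" and ne: "unit_root N j \<noteq> 1"
  shows "cmod (fejer_weight N M j) \<le> 4 / ((cmod (unit_root N j - 1))\<^sup>2 * real M * real N)"
proof -
  have "cmod (\<Sum>a<M. unit_root N (j * a)) \<le> 2 / cmod (unit_root N j - 1)"
    using norm_geometric_sum_le[OF norm_unit_root ne] by (simp add: unit_root_power)
  then have "(cmod (\<Sum>a<M. unit_root N (j * a)))\<^sup>2 \<le> (2 / cmod (unit_root N j - 1))\<^sup>2"
    by (intro power_mono) simp_all
  then have "(cmod (\<Sum>a<M. unit_root N (j * a)))\<^sup>2 / (real M * real N)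
      \<le> 4 / (cmod (unit_root N j - 1))\<^sup>2 / (real M * real N)"
    using N M by (intro divide_right_mono) (simp_all add: power_divide)
  then show ?thesis unfolding norm_fejer_weight by (simp add: mult.assoc)
qed

section \<open>Gauge averages\<close>

context gauge
begin

text \<open>A discrete version of \<open>\<integral> w(\<lambda>) \<gamma>\<^sub>\<lambda>(S) d\<lambda>\<close> over the unit circle.\<close>

definition gauge_average :: "nat \<Rightarrow> (nat \<Rightarrow> complex) \<Rightarrow> ('a \<Rightarrow> 'a) \<Rightarrow> 'a \<Rightarrow> 'a"
  where "gauge_average N w S = (\<lambda>x. \<Sum>j<N. w j *\<^sub>C \<gamma> (unit_root N j) S x)"

lemma bounded_op_gauge_average: "S \<in> alg_T T \<Longrightarrow> bounded_op (gauge_average N w S)"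
  unfolding gauge_average_def
  by (intro bounded_op_sum bounded_op_scaleC bounded_op_gauge) simp_all

lemma onorm_gauge_average_diff_le:
  assumes S: "S \<in> alg_T T" and R: "R \<in> alg_T T"
  shows "onorm (\<lambda>x. gauge_average N w S x - gauge_average N w R x)
    \<le> (\<Sum>j<N. cmod (w j)) * onorm (\<lambda>x. S x - R x)"
proof -
  have SR: "(\<lambda>x. S x - R x) \<in> alg_T T" by (rule alg_T_diff[OF bounded_T S R])
  have "(\<lambda>x. gauge_average N w S x - gauge_average N w R x)
      = (\<lambda>x. \<Sum>j<N. w j *\<^sub>C \<gamma> (unit_root N j) (\<lambda>x. S x - R x) x)"
    unfolding gauge_average_def gauge_diff[OF norm_unit_root S R]
    by (simp add: scaleC_diff_right sum_subtractf)
  then have "onorm (\<lambda>x. gauge_average N w S x - gauge_average N w R x)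
      \<le> (\<Sum>j<N. onorm (\<lambda>x. w j *\<^sub>C \<gamma> (unit_root N j) (\<lambda>x. S x - R x) x))"
    using SR by (simp add: onorm_sum bounded_op_bounded_linear bounded_op_scaleC bounded_op_gauge)
  also have "\<dots> = (\<Sum>j<N. cmod (w j) * onorm (\<lambda>x. S x - R x))"
    using SR by (simp add: onorm_scaleC bounded_op_gauge onorm_gauge)
  finally show ?thesis by (simp add: sum_distrib_right)
qed

lemma gauge_average_pow_comb:
  assumes "finite I" "0 \<notin> I"
  shows "gauge_average N w (pow_comb T I c) = pow_comb T I (\<lambda>k. c k * weight_transform N w k)"
proof -
  have "gauge_average N w (pow_comb T I c)
      = (\<lambda>x. \<Sum>j<N. \<Sum>k\<in>I. (w j * (c k * unit_root N (j * k))) *\<^sub>C (T ^^ k) x)"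
    unfolding gauge_average_def gauge_pow_comb[OF norm_unit_root assms]
    by (simp add: pow_comb_def scaleC_sum_right scaleC_scaleC unit_root_power)
  also have "\<dots> = pow_comb T I (\<lambda>k. c k * weight_transform N w k)"
    unfolding pow_comb_def weight_transform_def
    by (subst sum.swap) (simp add: scaleC_sum_left[symmetric] sum_distrib_left algebra_simps)
  finally show ?thesis .
qed

lemma fejer_average_pow_comb:
  assumes I: "finite I" "0 \<notin> I" and M: "M > 0" and N: "\<And>k. k \<in> I \<Longrightarrow> k + M \<le> N"
  shows "gauge_average N (fejer_weight N M) (pow_comb T I c)
    = pow_comb T I (\<lambda>k. c k * (of_nat (M - k) / of_nat M))"
  unfolding gauge_average_pow_comb[OF I]
proof (rule pow_comb_cong)
  fix k assume "k \<in> I"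
  with N M have "N > 0" "k + M \<le> N" by fastforce+
  then show "c k * weight_transform N (fejer_weight N M) k = c k * (of_nat (M - k) / of_nat M)"
    using M by (simp add: weight_transform_fejer_weight)
qed

lemma fejer_term_le:
  assumes S: "S \<in> alg_T T" and N: "N > 0" and M: "M > 0" and \<delta>: "\<delta> > 0"
    and cont: "\<forall>l. cmod l = 1 \<longrightarrow> cmod (l - 1) < \<delta> \<longrightarrow> onorm (\<lambda>x. \<gamma> l S x - S x) < \<eta>"
  shows "cmod (fejer_weight N M j) * onorm (\<lambda>x. \<gamma> (unit_root N j) S x - S x)
    \<le> cmod (fejer_weight N M j) * \<eta> + 8 * onorm S / (real M * \<delta>\<^sup>2 * real N)"
proof -
  have bS: "bounded_op S" using S by (rule bounded_op_alg_T)
  have bd: "bounded_op (\<lambda>x. \<gamma> l S x - S x)" if "cmod l = 1" for l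
    using bounded_op_gauge[OF that S] bS by (rule bounded_op_diff)
  have "0 \<le> onorm (\<lambda>x. \<gamma> 1 S x - S x)"
    using bd[of 1] by (simp add: onorm_pos_le bounded_op_bounded_linear)
  moreover have "onorm (\<lambda>x. \<gamma> 1 S x - S x) < \<eta>" using cont[rule_format, of 1] \<delta> by simp
  ultimately have \<eta>: "\<eta> > 0" by linarith
  have rest: "0 \<le> 8 * onorm S / (real M * \<delta>\<^sup>2 * real N)"
    using onorm_pos_le[OF bounded_op_bounded_linear[OF bS]] by simp
  \<comment> \<open>Roots near \<open>1\<close> are handled by continuity, the others by the decay of the kernel.\<close>
  show ?thesis
  proof (cases "cmod (unit_root N j - 1) < \<delta>")
    case True
    then have "onorm (\<lambda>x. \<gamma> (unit_root N j) S x - S x) \<le> \<eta>"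
      using cont by (meson less_imp_le norm_unit_root)
    then show ?thesis using rest by (simp add: mult_left_mono add_increasing2)
  next
    case False
    then have ne: "unit_root N j \<noteq> 1" using \<delta> by (metis diff_self norm_zero)
    have "4 / ((cmod (unit_root N j - 1))\<^sup>2 * real M * real N) \<le> 4 / (\<delta>\<^sup>2 * real M * real N)"
      using False \<delta> N M ne by (intro divide_left_mono mult_right_mono mult_pos_pos power_mono) simp_all
    then have w: "cmod (fejer_weight N M j) \<le> 4 / (\<delta>\<^sup>2 * real M * real N)"
      using norm_fejer_weight_le[OF N M ne] by linarith
    have o: "onorm (\<lambda>x. \<gamma> (unit_root N j) S x - S x) \<le> 2 * onorm S"
      using onorm_diff_le[OF bounded_op_gauge[OF norm_unit_root S] bS] onorm_gauge[OF norm_unit_root S]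
      by simp
    have "cmod (fejer_weight N M j) * onorm (\<lambda>x. \<gamma> (unit_root N j) S x - S x)
        \<le> 4 / (\<delta>\<^sup>2 * real M * real N) * (2 * onorm S)"
      using w o by (intro mult_mono) (simp_all add: onorm_pos_le bounded_op_bounded_linear bd)
    also have "\<dots> = 8 * onorm S / (real M * \<delta>\<^sup>2 * real N)" by (simp add: field_simps)
    finally show ?thesis using \<eta> by (simp add: add_increasing)
  qed
qed

lemma onorm_fejer_average_diff_le:
  assumes S: "S \<in> alg_T T" and N: "N > 0" and M: "M > 0" "M \<le> N" and \<delta>: "\<delta> > 0"
    and cont: "\<forall>l. cmod l = 1 \<longrightarrow> cmod (l - 1) < \<delta> \<longrightarrow> onorm (\<lambda>x. \<gamma> l S x - S x) < \<eta>"
  shows "onorm (\<lambda>x. gauge_average N (fejer_weight N M) S x - S x) \<le> \<eta> + 8 * onorm S / (real M * \<delta>\<^sup>2)"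
proof -
  let ?w = "fejer_weight N M"
  have bd: "bounded_op (\<lambda>x. \<gamma> (unit_root N j) S x - S x)" for j
    using bounded_op_gauge[OF norm_unit_root S] bounded_op_alg_T[OF S] by (rule bounded_op_diff)
  have "S x = (\<Sum>j<N. ?w j *\<^sub>C S x)" for x
    using sum_fejer_weight(1)[OF N M] by (simp add: scaleC_sum_left[symmetric] scaleC_one)
  then have "(\<lambda>x. gauge_average N ?w S x - S x)
      = (\<lambda>x. \<Sum>j<N. ?w j *\<^sub>C (\<gamma> (unit_root N j) S x - S x))"
    unfolding gauge_average_def by (simp add: scaleC_diff_right sum_subtractf)
  then have "onorm (\<lambda>x. gauge_average N ?w S x - S x)
      \<le> (\<Sum>j<N. cmod (?w j) * onorm (\<lambda>x. \<gamma> (unit_root N j) S x - S x))"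
    using onorm_sum[of "{..<N}" "\<lambda>j x. ?w j *\<^sub>C (\<gamma> (unit_root N j) S x - S x)"]
    by (simp add: bounded_op_bounded_linear bounded_op_scaleC bd onorm_scaleC)
  also have "\<dots> \<le> (\<Sum>j<N. cmod (?w j) * \<eta> + 8 * onorm S / (real M * \<delta>\<^sup>2 * real N))"
    by (intro sum_mono fejer_term_le[OF S N M(1) \<delta> cont])
  also have "\<dots> = \<eta> + 8 * onorm S / (real M * \<delta>\<^sup>2)"
    using sum_fejer_weight(2)[OF N M] N by (simp add: sum.distrib sum_distrib_right[symmetric])
  finally show ?thesis .
qed

lemma fejer_average_approx:
  assumes S: "S \<in> alg_T T" and e: "e > 0"
  obtains M where "M > 0"
    "\<And>N. M \<le> N \<Longrightarrow> onorm (\<lambda>x. S x - gauge_average N (fejer_weight N M) S x) < e"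
proof -
  obtain \<delta> where \<delta>: "\<delta> > 0"
    and cont: "\<forall>l. cmod l = 1 \<longrightarrow> cmod (l - 1) < \<delta> \<longrightarrow> onorm (\<lambda>x. \<gamma> l S x - S x) < e / 2"
    using gauge_continuous_at_one[OF S] e by (meson half_gt_zero)
  obtain M :: nat where M: "16 * onorm S / (e * \<delta>\<^sup>2) < real M"
    using reals_Archimedean2 by blast
  have M0: "M > 0"
    using M e \<delta> onorm_pos_le[OF bounded_op_bounded_linear[OF bounded_op_alg_T[OF S]]]
    by (metis of_nat_0_less_iff divide_nonneg_pos mult_nonneg_nonneg zero_le_numeral
        zero_less_power le_less_trans mult_pos_pos)
  have "16 * onorm S < real M * (e * \<delta>\<^sup>2)"
    using M e \<delta> by (simp add: pos_divide_less_eq)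
  then have small: "8 * onorm S / (real M * \<delta>\<^sup>2) < e / 2"
    using M0 \<delta> by (simp add: pos_divide_less_eq field_simps)
  show ?thesis
  proof (rule that[OF M0])
    fix N assume "M \<le> N"
    then have "onorm (\<lambda>x. gauge_average N (fejer_weight N M) S x - S x) \<le> e / 2 + 8 * onorm S / (real M * \<delta>\<^sup>2)"
      using M0 by (intro onorm_fejer_average_diff_le[OF S _ M0 _ \<delta> cont]) simp_all
    then show "onorm (\<lambda>x. S x - gauge_average N (fejer_weight N M) S x) < e"
      using small by (simp add: onorm_diff_commute[of S])
  qed
qed

end

lemma closed_ideal_subset: "closed_ideal T J \<Longrightarrow> J \<subseteq> alg_T T"
  unfolding closed_ideal_def by blast

lemma closed_ideal_zero: "closed_ideal T J \<Longrightarrow> (\<lambda>x. 0) \<in> J"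
  unfolding closed_ideal_def by blast

lemma closed_ideal_add: "closed_ideal T J \<Longrightarrow> A \<in> J \<Longrightarrow> B \<in> J \<Longrightarrow> (\<lambda>x. A x + B x) \<in> J"
  unfolding closed_ideal_def by blast

lemma closed_ideal_scaleC: "closed_ideal T J \<Longrightarrow> A \<in> J \<Longrightarrow> (\<lambda>x. c *\<^sub>C A x) \<in> J"
  unfolding closed_ideal_def by blast

lemma closed_ideal_comp_left: "closed_ideal T J \<Longrightarrow> A \<in> J \<Longrightarrow> B \<in> alg_T T \<Longrightarrow> B \<circ> A \<in> J"
  unfolding closed_ideal_def by blast

lemma closed_ideal_closure: "closed_ideal T J \<Longrightarrow> opnorm_closure J \<subseteq> J"
  unfolding closed_ideal_def op_closed_def by blast

lemma closed_ideal_sum: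
  assumes J: "closed_ideal T J"
  shows "finite I \<Longrightarrow> (\<And>i. i \<in> I \<Longrightarrow> f i \<in> J) \<Longrightarrow> (\<lambda>x. \<Sum>i\<in>I. f i x) \<in> J"
proof (induction I rule: finite_induct)
  case empty
  then show ?case using closed_ideal_zero[OF J] by simp
next
  case (insert i I)
  then have "(\<lambda>x. f i x + (\<lambda>x. \<Sum>i\<in>I. f i x) x) \<in> J" by (intro closed_ideal_add[OF J]) auto
  then show ?case using insert by simp
qed

lemma pow_comb_in_closed_ideal:
  "closed_ideal T J \<Longrightarrow> finite I \<Longrightarrow> (\<And>k. k \<in> I \<Longrightarrow> T ^^ k \<in> J) \<Longrightarrow> pow_comb T I c \<in> J"
  unfolding pow_comb_def by (intro closed_ideal_sum closed_ideal_scaleC)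

lemma zero_closed_ideal:
  assumes "bounded_op T"
  shows "closed_ideal T {\<lambda>x. 0}"
proof -
  have "S = (\<lambda>x. 0)" if "S \<in> opnorm_closure {\<lambda>x. 0}" for S
  proof -
    have small: "onorm S < e" if "e > 0" for e
      using \<open>S \<in> opnorm_closure {\<lambda>x. 0}\<close> that by (auto simp: opnorm_closure_def)
    have "onorm S \<le> 0"
    proof (rule ccontr)
      assume "\<not> onorm S \<le> 0"
      then show False using small[of "onorm S"] by simp
    qed
    then show ?thesis
      using onorm_pos_le onorm_eq_0 bounded_op_bounded_linear[OF bounded_op_opnorm_closure[OF that]]
      by (metis antisym)
  qed
  then show ?thesis
    using funpow_in_alg_T[OF assms, of 1] pow_comb_in_alg_T[OF assms, of "{}"]
    unfolding closed_ideal_def op_closed_def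
    by (auto simp: pow_comb_def o_def bounded_op_0 bounded_op_alg_T)
qed

lemma gen_ideal_least: "closed_ideal T J \<Longrightarrow> R \<in> J \<Longrightarrow> gen_ideal T R \<subseteq> J"
  unfolding gen_ideal_def by blast

lemma subset_gen_ideal: "(\<And>K. closed_ideal T K \<Longrightarrow> R \<in> K \<Longrightarrow> J \<subseteq> K) \<Longrightarrow> J \<subseteq> gen_ideal T R"
  unfolding gen_ideal_def by blast

section \<open>Gauge invariant ideals\<close>

lemma exists_pos_add_mult_le:
  fixes a b :: real
  assumes "a > 0" "b \<ge> 0"
  shows "\<exists>\<epsilon>>0. \<epsilon> + \<epsilon> * b \<le> a"
proof (intro exI conjI)
  show "a / (1 + b) > 0" using assms by simp
  have "a / (1 + b) + a / (1 + b) * b = a / (1 + b) * (1 + b)"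
    by (simp add: distrib_left)
  also have "\<dots> = a" using assms by simp
  finally show "a / (1 + b) + a / (1 + b) * b \<le> a" by simp
qed

locale gauge_invariant_ideal = gauge +
  fixes J :: "('a \<Rightarrow> 'a) set"
  assumes closed_ideal: "closed_ideal T J"
    and gauge_invariant: "\<forall>l. cmod l = 1 \<longrightarrow> \<gamma> l ` J \<subseteq> J"
begin

lemma ideal_in_alg_T: "S \<in> J \<Longrightarrow> S \<in> alg_T T"
  using closed_ideal_subset[OF closed_ideal] by blast

lemma gauge_average_in_ideal: "S \<in> J \<Longrightarrow> gauge_average N w S \<in> J"
  unfolding gauge_average_def
  using gauge_invariant norm_unit_root
  by (intro closed_ideal_sum[OF closed_ideal] closed_ideal_scaleC[OF closed_ideal]) blast+

lemma power_separated_from_ideal: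
  assumes "T ^^ n \<notin> J"
  shows "\<exists>d>0. \<forall>Q\<in>J. d \<le> onorm (\<lambda>x. (T ^^ n) x - Q x)"
proof (rule ccontr)
  assume "\<not> ?thesis"
  then have "T ^^ n \<in> opnorm_closure J"
    unfolding opnorm_closure_def using bounded_op_funpow[OF bounded_T] by (auto simp: not_le)
  then show False using closed_ideal_closure[OF closed_ideal] assms by blast
qed

lemma powers_uniformly_separated_from_ideal:
  assumes "finite B"
  shows "\<exists>d>0. \<forall>n\<in>B. T ^^ n \<notin> J \<longrightarrow> (\<forall>Q\<in>J. d \<le> onorm (\<lambda>x. (T ^^ n) x - Q x))"
  using assms
proof (induction B rule: finite_induct)
  case empty
  show ?case by (auto intro: exI[of _ 1])
next
  case (insert n B)
  obtain d where d: "d > 0"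
    "\<forall>m\<in>B. T ^^ m \<notin> J \<longrightarrow> (\<forall>Q\<in>J. d \<le> onorm (\<lambda>x. (T ^^ m) x - Q x))"
    using insert.IH by blast
  show ?case
  proof (cases "T ^^ n \<in> J")
    case True
    with d show ?thesis by blast
  next
    case False
    then obtain d' where "d' > 0" "\<forall>Q\<in>J. d' \<le> onorm (\<lambda>x. (T ^^ n) x - Q x)"
      using power_separated_from_ideal by blast
    with d show ?thesis by (intro exI[of _ "min d d'"]) force
  qed
qed

lemma coefficient_le_of_separated:
  assumes sep: "\<forall>Q\<in>J. d \<le> onorm (\<lambda>x. (T ^^ n) x - Q x)" and d: "d > 0"
    and F: "F \<in> J" and close: "onorm (\<lambda>x. F x - c *\<^sub>C (T ^^ n) x) < \<epsilon>"
  shows "cmod c \<le> \<epsilon> / d"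
proof (cases "c = 0")
  case True
  have "0 \<le> onorm (\<lambda>x. F x - c *\<^sub>C (T ^^ n) x)"
    using ideal_in_alg_T[OF F]
    by (intro onorm_pos_le bounded_op_bounded_linear bounded_op_diff bounded_op_scaleC
        bounded_op_funpow bounded_T bounded_op_alg_T)
  then show ?thesis using True close d by simp
next
  case False
  have "(\<lambda>x. inverse c *\<^sub>C F x) \<in> J" by (rule closed_ideal_scaleC[OF closed_ideal F])
  then have "cmod c * d \<le> cmod c * onorm (\<lambda>x. (T ^^ n) x - inverse c *\<^sub>C F x)"
    using sep by (intro mult_left_mono) auto
  also have "\<dots> = onorm (\<lambda>x. c *\<^sub>C ((T ^^ n) x - inverse c *\<^sub>C F x))"
    using ideal_in_alg_T[OF F]
    by (intro onorm_scaleC[symmetric] bounded_op_diff bounded_op_scaleC bounded_op_funpow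
        bounded_T bounded_op_alg_T)
  also have "\<dots> = onorm (\<lambda>x. F x - c *\<^sub>C (T ^^ n) x)"
    using False onorm_diff_commute[of F]
    by (simp add: scaleC_diff_right scaleC_scaleC scaleC_one)
  finally show ?thesis using close d by (simp add: pos_le_divide_eq)
qed

lemma fourier_coefficient_le:
  assumes S: "S \<in> J" and I: "finite I" "0 \<notin> I" and n: "n \<in> I"
    and close: "onorm (\<lambda>x. S x - pow_comb T I c x) < \<epsilon>"
    and sep: "\<forall>Q\<in>J. d \<le> onorm (\<lambda>x. (T ^^ n) x - Q x)" and d: "d > 0"
  shows "cmod (c n) \<le> \<epsilon> / d"
proof -
  obtain N where N: "I \<subseteq> {..<N}" using finite_nat_bounded[OF I(1)] by blast
  have nN: "0 < n" "n < N" using n I(2) N by (metis gr0I, blast)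
  let ?F = "gauge_average N (fourier_weight N n)"
  have "?F (pow_comb T I c) = pow_comb T I (\<lambda>k. if k = n then c n else 0)"
    unfolding gauge_average_pow_comb[OF I]
  proof (rule pow_comb_cong)
    fix k assume "k \<in> I"
    then have "0 < k" "k < N" using I(2) N by (metis gr0I, blast)
    then show "c k * weight_transform N (fourier_weight N n) k = (if k = n then c n else 0)"
      using nN by (simp add: weight_transform_fourier_weight)
  qed
  also have "\<dots> = (\<lambda>x. c n *\<^sub>C (T ^^ n) x)" by (rule pow_comb_delta[OF I(1) n])
  finally have Fp: "?F (pow_comb T I c) = (\<lambda>x. c n *\<^sub>C (T ^^ n) x)" .
  have "onorm (\<lambda>x. ?F S x - ?F (pow_comb T I c) x)
      \<le> (\<Sum>j<N. cmod (fourier_weight N n j)) * onorm (\<lambda>x. S x - pow_comb T I c x)"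
    using ideal_in_alg_T[OF S] pow_comb_in_alg_T[OF bounded_T I]
    by (rule onorm_gauge_average_diff_le)
  also have "\<dots> < \<epsilon>" using close nN by (simp add: sum_norm_fourier_weight)
  finally show ?thesis
    using coefficient_le_of_separated[OF sep d gauge_average_in_ideal[OF S]] Fp by simp
qed

lemma discarded_terms_le:
  assumes S: "S \<in> J" and I: "finite I" "0 \<notin> I"
    and close: "onorm (\<lambda>x. S x - pow_comb T I c x) < \<epsilon>"
    and M: "M > 0" and d: "d > 0"
    and sep: "\<forall>n\<in>{1..<M}. T ^^ n \<notin> J \<longrightarrow> (\<forall>Q\<in>J. d \<le> onorm (\<lambda>x. (T ^^ n) x - Q x))"
  shows "onorm (pow_comb T (I - {k. T ^^ k \<in> J}) (\<lambda>k. c k * (of_nat (M - k) / of_nat M)))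
    \<le> \<epsilon> / d * (\<Sum>n\<in>{1..<M}. onorm (T ^^ n))"
proof -
  let ?a = "\<lambda>k. c k * (of_nat (M - k) / of_nat M)" and ?D = "I - {k. T ^^ k \<in> J}"
  have onorm_T: "0 \<le> onorm (T ^^ k)" for k
    by (simp add: onorm_pos_le bounded_op_bounded_linear bounded_op_funpow bounded_T)
  have "0 \<le> onorm (\<lambda>x. S x - pow_comb T I c x)"
    by (intro onorm_pos_le bounded_op_bounded_linear bounded_op_diff
        bounded_op_alg_T[OF ideal_in_alg_T[OF S]] bounded_op_pow_comb[OF bounded_T I(1)])
  with close d have nonneg: "0 \<le> \<epsilon> / d * onorm (T ^^ k)" for k
    using onorm_T by simp
  have term_le: "cmod (?a k) * onorm (T ^^ k) \<le> (if k \<in> {1..<M} then \<epsilon> / d * onorm (T ^^ k) else 0)"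
    if k: "k \<in> ?D" for k
  proof (cases "k < M")
    case True
    moreover have "k \<noteq> 0" using k I(2) by (metis DiffD1)
    ultimately have kM: "k \<in> {1..<M}" by simp
    then have "\<forall>Q\<in>J. d \<le> onorm (\<lambda>x. (T ^^ k) x - Q x)" using sep k by blast
    then have "cmod (c k) \<le> \<epsilon> / d"
      using fourier_coefficient_le[OF S I _ close _ d] k by blast
    moreover have "cmod (?a k) \<le> cmod (c k)"
      using norm_fejer_factor_le[OF M, of k] unfolding norm_mult by (simp add: mult_left_le)
    ultimately have "cmod (?a k) \<le> \<epsilon> / d" by linarith
    then have "cmod (?a k) * onorm (T ^^ k) \<le> \<epsilon> / d * onorm (T ^^ k)"
      using onorm_T by (rule mult_right_mono)
    with kM show ?thesis by simp
  qed simp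
  have "onorm (pow_comb T ?D ?a) \<le> (\<Sum>k\<in>?D. cmod (?a k) * onorm (T ^^ k))"
    using I by (intro onorm_pow_comb_le bounded_T) simp
  also have "\<dots> \<le> (\<Sum>k\<in>?D. if k \<in> {1..<M} then \<epsilon> / d * onorm (T ^^ k) else 0)"
    by (rule sum_mono) (rule term_le)
  also have "\<dots> = (\<Sum>k\<in>?D \<inter> {1..<M}. \<epsilon> / d * onorm (T ^^ k))"
    by (rule sum.inter_restrict[symmetric]) (use I in simp)
  also have "\<dots> \<le> (\<Sum>k\<in>{1..<M}. \<epsilon> / d * onorm (T ^^ k))"
    using nonneg by (intro sum_mono2) auto
  finally show ?thesis by (simp add: sum_distrib_left)
qed

lemma fejer_average_near_ideal_powers:
  assumes S: "S \<in> J" and I: "finite I" "0 \<notin> I"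
    and close: "onorm (\<lambda>x. S x - pow_comb T I c x) < \<epsilon>"
    and M: "M > 0" "M \<le> N" and N: "\<And>k. k \<in> I \<Longrightarrow> k + M \<le> N" and d: "d > 0"
    and sep: "\<forall>n\<in>{1..<M}. T ^^ n \<notin> J \<longrightarrow> (\<forall>Q\<in>J. d \<le> onorm (\<lambda>x. (T ^^ n) x - Q x))"
  shows "onorm (\<lambda>x. gauge_average N (fejer_weight N M) S x
      - pow_comb T (I \<inter> {k. T ^^ k \<in> J}) (\<lambda>k. c k * (of_nat (M - k) / of_nat M)) x)
    < \<epsilon> + \<epsilon> / d * (\<Sum>n\<in>{1..<M}. onorm (T ^^ n))"
proof -
  let ?\<Phi> = "gauge_average N (fejer_weight N M)" and ?p = "pow_comb T I c"
    and ?a = "\<lambda>k. c k * (of_nat (M - k) / of_nat M)" and ?K = "{k. T ^^ k \<in> J}"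
  let ?Q = "pow_comb T (I \<inter> ?K) ?a"
  have SA: "S \<in> alg_T T" by (rule ideal_in_alg_T[OF S])
  have pA: "?p \<in> alg_T T" by (rule pow_comb_in_alg_T[OF bounded_T I])
  have \<Phi>p: "?\<Phi> ?p = (\<lambda>x. ?Q x + pow_comb T (I - ?K) ?a x)"
    using fejer_average_pow_comb[OF I M(1) N] pow_comb_Int_Diff[OF I(1)] by simp
  have "onorm (\<lambda>x. ?\<Phi> S x - ?Q x) \<le> onorm (\<lambda>x. ?\<Phi> S x - ?\<Phi> ?p x) + onorm (\<lambda>x. ?\<Phi> ?p x - ?Q x)"
    using SA pA I(1)
    by (intro onorm_diff_triangle) (simp_all add: bounded_op_gauge_average bounded_op_pow_comb[OF bounded_T])
  moreover have "onorm (\<lambda>x. ?\<Phi> S x - ?\<Phi> ?p x) < \<epsilon>"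
    using onorm_gauge_average_diff_le[OF SA pA, of N "fejer_weight N M"] close M
    by (simp add: sum_fejer_weight(2))
  moreover have "onorm (\<lambda>x. ?\<Phi> ?p x - ?Q x) \<le> \<epsilon> / d * (\<Sum>n\<in>{1..<M}. onorm (T ^^ n))"
    using discarded_terms_le[OF S I close M(1) d sep] unfolding \<Phi>p by simp
  ultimately show ?thesis by linarith
qed

lemma ideal_approx_by_powers:
  assumes S: "S \<in> J" and e: "e > 0"
  shows "\<exists>I a. finite I \<and> (\<forall>k\<in>I. 0 < k \<and> T ^^ k \<in> J) \<and> onorm (\<lambda>x. S x - pow_comb T I a x) < e"
proof -
  have "e / 2 > 0" using e by simp
  then obtain M where M: "M > 0"
    and fejer: "\<And>N. M \<le> N \<Longrightarrow> onorm (\<lambda>x. S x - gauge_average N (fejer_weight N M) S x) < e / 2"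
    using fejer_average_approx[OF ideal_in_alg_T[OF S]] by blast
  obtain d where d: "d > 0"
    and sep: "\<forall>n\<in>{1..<M}. T ^^ n \<notin> J \<longrightarrow> (\<forall>Q\<in>J. d \<le> onorm (\<lambda>x. (T ^^ n) x - Q x))"
    using powers_uniformly_separated_from_ideal[of "{1..<M}"] by blast
  \<comment> \<open>\<open>\<epsilon>\<close> is chosen after \<open>M\<close> and \<open>d\<close>: the Fejer average discards all powers beyond \<open>M\<close>.\<close>
  define C where "C = (\<Sum>n\<in>{1..<M}. onorm (T ^^ n))"
  have "C / d \<ge> 0"
    unfolding C_def using d
    by (intro divide_nonneg_pos sum_nonneg onorm_pos_le bounded_op_bounded_linear
        bounded_op_funpow bounded_T)
  then obtain \<epsilon> where \<epsilon>: "\<epsilon> > 0" "\<epsilon> + \<epsilon> * (C / d) \<le> e / 2"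
    using exists_pos_add_mult_le[OF \<open>e / 2 > 0\<close> \<open>C / d \<ge> 0\<close>] by blast
  obtain p where "p \<in> poly_ops T" and Sp: "onorm (\<lambda>x. S x - p x) < \<epsilon>"
    using ideal_in_alg_T[OF S] \<epsilon>(1) unfolding alg_T_def by (rule opnorm_closureE)
  then obtain I c where I: "finite I" "0 \<notin> I" and p: "p = pow_comb T I c"
    by (elim poly_opsE)
  obtain m where m: "I \<subseteq> {..<m}" using finite_nat_bounded[OF I(1)] by blast
  define a where "a k = c k * (of_nat (M - k) / of_nat M)" for k
  define K where "K = {k. T ^^ k \<in> J}"
  let ?\<Phi> = "gauge_average (M + m) (fejer_weight (M + m) M)" and ?Q = "pow_comb T (I \<inter> K) a"
  have "onorm (\<lambda>x. ?\<Phi> S x - ?Q x) < \<epsilon> + \<epsilon> / d * C"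
    unfolding C_def K_def a_def
    by (rule fejer_average_near_ideal_powers[OF S I Sp[unfolded p] M _ _ d sep]) (use m in auto)
  moreover have "onorm (\<lambda>x. S x - ?\<Phi> S x) < e / 2" by (rule fejer) simp
  moreover have "onorm (\<lambda>x. S x - ?Q x) \<le> onorm (\<lambda>x. S x - ?\<Phi> S x) + onorm (\<lambda>x. ?\<Phi> S x - ?Q x)"
    using ideal_in_alg_T[OF S] I(1)
    by (intro onorm_diff_triangle) (simp_all add: bounded_op_alg_T bounded_op_gauge_average
        bounded_op_pow_comb[OF bounded_T])
  moreover have "\<epsilon> / d * C = \<epsilon> * (C / d)" by simp
  ultimately have "onorm (\<lambda>x. S x - ?Q x) < e" using \<epsilon>(2) by linarith
  moreover have "\<forall>k\<in>I \<inter> K. 0 < k \<and> T ^^ k \<in> J"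
    using I(2) unfolding K_def by (metis IntD1 IntD2 gr0I mem_Collect_eq)
  ultimately show ?thesis
    using I(1) by (intro exI[of _ "I \<inter> K"] exI[of _ a]) simp
qed

lemma subset_closed_ideal_of_powers:
  assumes K: "closed_ideal T K" and pow: "\<And>n. 0 < n \<Longrightarrow> T ^^ n \<in> J \<Longrightarrow> T ^^ n \<in> K"
  shows "J \<subseteq> K"
proof
  fix S assume S: "S \<in> J"
  have "S \<in> opnorm_closure K"
    unfolding opnorm_closure_def
  proof (intro CollectI conjI allI impI)
    show "bounded_op S" by (rule bounded_op_alg_T[OF ideal_in_alg_T[OF S]])
    fix e :: real assume "e > 0"
    then obtain I a where I: "finite I" "\<forall>k\<in>I. 0 < k \<and> T ^^ k \<in> J"
      and close: "onorm (\<lambda>x. S x - pow_comb T I a x) < e"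
      using ideal_approx_by_powers[OF S \<open>e > 0\<close>] by auto
    have "pow_comb T I a \<in> K"
    proof (rule pow_comb_in_closed_ideal[OF K I(1)])
      fix k assume "k \<in> I"
      with I(2) show "T ^^ k \<in> K" by (intro pow) auto
    qed
    with close show "\<exists>Q\<in>K. onorm (\<lambda>x. S x - Q x) < e" by (rule bexI)
  qed
  then show "S \<in> K" by (rule subsetD[OF closed_ideal_closure[OF K]])
qed

lemma ideal_contains_power:
  assumes "J \<noteq> {\<lambda>x. 0}"
  shows "\<exists>n>0. T ^^ n \<in> J"
proof (rule ccontr)
  assume no_power: "\<not> ?thesis"
  have "J \<subseteq> {\<lambda>x. 0}"
  proof (rule subset_closed_ideal_of_powers[OF zero_closed_ideal[OF bounded_T]])
    fix n :: nat assume "0 < n" "T ^^ n \<in> J"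
    with no_power show "T ^^ n \<in> {\<lambda>x. 0}" by blast
  qed
  then show False using assms closed_ideal_zero[OF closed_ideal] by blast
qed

lemma ideal_eq_gen_ideal_least_power:
  assumes n0: "T ^^ n0 \<in> J" and least: "\<And>n. 0 < n \<Longrightarrow> T ^^ n \<in> J \<Longrightarrow> n0 \<le> n"
  shows "J = gen_ideal T (T ^^ n0)"
proof
  show "gen_ideal T (T ^^ n0) \<subseteq> J" by (rule gen_ideal_least[OF closed_ideal n0])
  show "J \<subseteq> gen_ideal T (T ^^ n0)"
  proof (rule subset_gen_ideal)
    fix K assume K: "closed_ideal T K" "T ^^ n0 \<in> K"
    show "J \<subseteq> K"
    proof (rule subset_closed_ideal_of_powers[OF K(1)])
      fix n assume n: "0 < n" "T ^^ n \<in> J"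
      show "T ^^ n \<in> K"
      proof (cases "n = n0")
        case False
        with least[OF n] have "T ^^ n = T ^^ (n - n0) \<circ> T ^^ n0" "1 \<le> n - n0"
          by (simp_all add: funpow_add[symmetric])
        then show ?thesis
          using closed_ideal_comp_left[OF K(1) K(2) funpow_in_alg_T[OF bounded_T]] by simp
      qed (use K in simp)
    qed
  qed
qed

end

theorem mainTheorem3:
  fixes T :: "'a::complex_hilbert_space \<Rightarrow> 'a"
    and \<gamma> :: "complex \<Rightarrow> ('a \<Rightarrow> 'a) \<Rightarrow> ('a \<Rightarrow> 'a)"
    and J :: "('a \<Rightarrow> 'a) set"
  assumes "bounded_op T"
    and "gauge_action T \<gamma>"
    and "closed_ideal T J"
    and "J \<noteq> {\<lambda>x. 0}"
    and "\<forall>l. cmod l = 1 \<longrightarrow> \<gamma> l ` J \<subseteq> J"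
  shows "\<exists>n::nat. n \<ge> 1 \<and> J = gen_ideal T (T ^^ n)"
proof -
  interpret gauge_invariant_ideal T \<gamma> J using assms by unfold_locales
  define n0 where "n0 = (LEAST n. 0 < n \<and> T ^^ n \<in> J)"
  have n0: "0 < n0" "T ^^ n0 \<in> J"
    using LeastI_ex[OF ideal_contains_power[OF assms(4)]] unfolding n0_def by auto
  have "J = gen_ideal T (T ^^ n0)"
  proof (rule ideal_eq_gen_ideal_least_power[OF n0(2)])
    show "n0 \<le> n" if "0 < n" "T ^^ n \<in> J" for n
      unfolding n0_def using that by (intro Least_le) simp
  qed
  with n0(1) show ?thesis by (intro exI[of _ n0]) simp
qed

end
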